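(* Let $\mathcal{A}\subset\mathbb{Z}^2$ be finite with $\Delta_{\mathcal{A}}$ a polygon, and let $f\colon\mathcal{A}\to\mathbb{R}^2$ be compatible. Then for every edge $\delta$ of $\Delta_{\mathcal{A}}$ there exist $\mathbf{d},\mathbf{d}'\in\delta\cap\mathcal{A}$ and $\mathbf{a}\in\mathcal{A}\setminus\delta$ such that $f(\mathbf{d}),f(\mathbf{d}'),f(\mathbf{a})$ are affinely independent.
   Context: Write $\Delta_{\mathcal{A}}$ for the convex hull of $\mathcal{A}$. An affinely independent triple $p_0,p_1,p_2\in\mathbb{R}^2$ has orientation given by the sign of $\det(p_1-p_0,\,p_2-p_0)$; it is positively oriented if this determinant is positive. An assignment $f\colon\mathcal{A}\to\mathbb{R}^2$ is weakly compatible if both of the following hold: <ol> <li>There exist affinely independent $\mathbf{a}_0,\mathbf{a}_1,\mathbf{a}_2\in\mathcal{A}$ such that $f(\mathbf{a}_0),f(\mathbf{a}_1),f(\mathbf{a}_2)$ are affinely independent.</li> <li>For any affinely independent $\mathbf{a}'_0,\mathbf{a}'_1,\mathbf{a}'_2\in\mathcal{A}$ with the same orientation as $\mathbf{a}_0,\mathbf{a}_1,\mathbf{a}_2$: if $f(\mathbf{a}'_0),f(\mathbf{a}'_1),f(\mathbf{a}'_2)$ are affinely independent, then they have the same orientation as $f(\mathbf{a}_0),f(\mathbf{a}_1),f(\mathbf{a}_2)$.</li> </ol> The assignment $f$ is compatible if it is weakly compatible and no two distinct vertices of $\Delta_{\mathcal{A}}$ have the same image under $f$. *)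

theory Defs
  imports "HOL-Analysis.Analysis"
begin

definition det3 :: "real \<times> real \<Rightarrow> real \<times> real \<Rightarrow> real \<times> real \<Rightarrow> real" where
  "det3 p0 p1 p2 =
     (fst p1 - fst p0) * (snd p2 - snd p0) - (snd p1 - snd p0) * (fst p2 - fst p0)"

definition orient :: "real \<times> real \<Rightarrow> real \<times> real \<Rightarrow> real \<times> real \<Rightarrow> real" where
  "orient p0 p1 p2 = sgn (det3 p0 p1 p2)"

definition aff_indep3 :: "'a::real_vector \<Rightarrow> 'a \<Rightarrow> 'a \<Rightarrow> bool" where
  "aff_indep3 p0 p1 p2 \<longleftrightarrow> distinct [p0, p1, p2] \<and> \<not> affine_dependent {p0, p1, p2}"

definition weakly_compatible ::
  "(real \<times> real) set \<Rightarrow> (real \<times> real \<Rightarrow> real \<times> real) \<Rightarrow> bool" where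
  "weakly_compatible A f \<longleftrightarrow>
     (\<exists>a0\<in>A. \<exists>a1\<in>A. \<exists>a2\<in>A.
        aff_indep3 a0 a1 a2 \<and> aff_indep3 (f a0) (f a1) (f a2) \<and>
        (\<forall>b0\<in>A. \<forall>b1\<in>A. \<forall>b2\<in>A.
           aff_indep3 b0 b1 b2 \<and> orient b0 b1 b2 = orient a0 a1 a2 \<and>
           aff_indep3 (f b0) (f b1) (f b2) \<longrightarrow>
           orient (f b0) (f b1) (f b2) = orient (f a0) (f a1) (f a2)))"

text \<open>Vertices of the convex hull are its extreme points.\<close>
definition compatible ::
  "(real \<times> real) set \<Rightarrow> (real \<times> real \<Rightarrow> real \<times> real) \<Rightarrow> bool" where
  "compatible A f \<longleftrightarrow> weakly_compatible A f \<and>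
     inj_on f {v. v extreme_point_of (convex hull A)}"

end

theory Submission
  imports Defs
begin

(* Let \<delta> be an edge of the polygon conv A.  Being a one-dimensional
   compact convex set, \<delta> has two distinct extreme points v1, v2; they are vertices
   of conv A lying in A, so compatibility gives f v1 \<noteq> f v2.  Since \<delta> is lower
   dimensional than conv A, some point a0 of A lies off \<delta>.  If the theorem failed,
   every image triple f d, f d', f a (d, d' on \<delta>, a off \<delta>) would be collinear.
   A purely affine argument then shows that all of f ` A lies on the line through
   f v1 and f v2, contradicting the first clause of weak compatibility, which asks
   for one affinely independent image triple. *)

lemma aff_indep3_iff_not_collinear: "aff_indep3 p q r \<longleftrightarrow> \<not> collinear {p, q, r}"
  unfolding aff_indep3_def collinear_3_eq_affine_dependent by auto

text \<open>A compact convex set of positive dimension has two distinct extreme points;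
  otherwise, by Krein--Milman, it would be contained in a single point.\<close>
lemma two_extreme_points:
  fixes S :: "'a::euclidean_space set"
  assumes "compact S" "convex S" "aff_dim S \<ge> 1"
  obtains v1 v2 where "v1 extreme_point_of S" "v2 extreme_point_of S" "v1 \<noteq> v2"
proof -
  define E where "E = {x. x extreme_point_of S}"
  have S_hull: "S = convex hull E"
    using Krein_Milman_Minkowski[OF assms(1,2)] by (simp add: E_def)
  have "\<exists>v1\<in>E. \<exists>v2\<in>E. v1 \<noteq> v2"
  proof (rule ccontr)
    assume "\<not> ?thesis"
    then obtain v where "E \<subseteq> {v}" by blast
    then have "S \<subseteq> {v}"
      unfolding S_hull by (metis convex_hull_singleton hull_mono convex_hull_empty subset_singletonD)
    then have "aff_dim S \<le> 0" by (metis aff_dim_sing aff_dim_subset)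
    with assms(3) show False by simp
  qed
  then show ?thesis using that by (auto simp: E_def)
qed

lemma face_has_two_vertices:
  fixes A :: "'a::euclidean_space set"
  assumes "finite A" "F face_of convex hull A" "aff_dim F \<ge> 1"
  obtains v1 v2 where "v1 extreme_point_of convex hull A" "v2 extreme_point_of convex hull A"
    "v1 \<in> F \<inter> A" "v2 \<in> F \<inter> A" "v1 \<noteq> v2"
proof -
  have "compact (convex hull A)" using assms(1) by (simp add: compact_convex_hull finite_imp_compact)
  then have "compact F"
    using face_of_imp_compact[OF _ _ assms(2)] by (simp add: convex_convex_hull)
  moreover have "convex F" using face_of_imp_convex[OF assms(2)] .
  ultimately obtain v1 v2 where "v1 extreme_point_of F" "v2 extreme_point_of F" "v1 \<noteq> v2"
    using two_extreme_points assms(3) by blast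
  then show ?thesis
    using that extreme_point_of_face[OF assms(2)] extreme_point_of_convex_hull by blast
qed

lemma point_off_lower_dim_convex:
  assumes "convex F" "aff_dim F < aff_dim (convex hull A)"
  obtains a where "a \<in> A" "a \<notin> F"
proof -
  have "\<not> A \<subseteq> F"
  proof
    assume "A \<subseteq> F"
    then have "convex hull A \<subseteq> F" using assms(1) by (simp add: hull_minimal)
    then have "aff_dim (convex hull A) \<le> aff_dim F" by (rule aff_dim_subset)
    with assms(2) show False by simp
  qed
  then show ?thesis using that by blast
qed

lemma collinear_image_from_mixed_triples:
  fixes g :: "'b \<Rightarrow> 'a::euclidean_space"
  assumes d12: "d1 \<in> D \<inter> A" "d2 \<in> D \<inter> A" "g d1 \<noteq> g d2"
    and a0: "a0 \<in> A - D"
    and mixed: "\<And>d d' a. d \<in> D \<inter> A \<Longrightarrow> d' \<in> D \<inter> A \<Longrightarrow> a \<in> A - D \<Longrightarrow> collinear {g d, g d', g a}"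
  shows "collinear (g ` A)"
proof -
  define L where "L = affine hull {g d1, g d2}"
  have outside: "g a \<in> L" if "a \<in> A - D" for a
    using mixed[OF d12(1,2) that] collinear_3_affine_hull[OF d12(3)] by (simp add: L_def)
  have ends: "g d1 \<in> L" "g d2 \<in> L" by (auto simp: L_def intro: hull_inc)
  text \<open>One of d1, d2 has image different from "g a0"; the line through
    these two images is L, and it captures all images of points of D.\<close>
  obtain d where d: "d \<in> D \<inter> A" "g d \<in> L" "g d \<noteq> g a0"
    using d12 ends by metis
  have inside: "g x \<in> L" if "x \<in> D \<inter> A" for x
  proof -
    have "collinear {g d, g a0, g x}"
      using mixed[OF d(1) that a0] by (simp add: insert_commute)
    then have "g x \<in> affine hull {g d, g a0}"
      using collinear_3_affine_hull d(3) by metis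
    moreover have "affine hull {g d, g a0} \<subseteq> L"
      using d(2) outside[OF a0] by (simp add: L_def hull_minimal)
    ultimately show ?thesis by blast
  qed
  have "g ` A \<subseteq> L" using inside outside by blast
  moreover have "collinear L" unfolding L_def collinear_affine_hull_collinear by simp
  ultimately show ?thesis using collinear_subset by blast
qed

theorem mainTheorem3:
  fixes A :: "(real \<times> real) set" and f :: "real \<times> real \<Rightarrow> real \<times> real"
  assumes "finite A"
    and "\<forall>p\<in>A. fst p \<in> \<int> \<and> snd p \<in> \<int>"
    and "aff_dim (convex hull A) = 2"
    and "compatible A f"
  shows "\<forall>\<delta>. \<delta> face_of (convex hull A) \<and> aff_dim \<delta> = 1 \<longrightarrow>
           (\<exists>d\<in>\<delta> \<inter> A. \<exists>d'\<in>\<delta> \<inter> A. \<exists>a\<in>A - \<delta>. aff_indep3 (f d) (f d') (f a))"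
proof (intro allI impI)
  fix \<delta> assume "\<delta> face_of (convex hull A) \<and> aff_dim \<delta> = 1"
  then have face: "\<delta> face_of (convex hull A)" and dim: "aff_dim \<delta> = 1" by auto
  obtain v1 v2 where v: "v1 extreme_point_of convex hull A" "v2 extreme_point_of convex hull A"
    "v1 \<in> \<delta> \<inter> A" "v2 \<in> \<delta> \<inter> A" "v1 \<noteq> v2"
    using face_has_two_vertices[OF assms(1) face] dim by (metis order.refl)
  have "f v1 \<noteq> f v2"
    using assms(4) v unfolding compatible_def inj_on_def by blast
  moreover obtain a0 where "a0 \<in> A - \<delta>"
    using point_off_lower_dim_convex[OF face_of_imp_convex[OF face], of A] dim assms(3) by force
  moreover obtain b0 b1 b2 where "b0 \<in> A" "b1 \<in> A" "b2 \<in> A" "aff_indep3 (f b0) (f b1) (f b2)"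
    using assms(4) unfolding compatible_def weakly_compatible_def by blast
  then have "\<not> collinear (f ` A)"
    by (metis aff_indep3_iff_not_collinear collinear_subset empty_subsetI image_eqI insert_subset)
  ultimately show "\<exists>d\<in>\<delta> \<inter> A. \<exists>d'\<in>\<delta> \<inter> A. \<exists>a\<in>A - \<delta>. aff_indep3 (f d) (f d') (f a)"
    using collinear_image_from_mixed_triples[of v1 \<delta> A v2 f] v(3,4)
    unfolding aff_indep3_iff_not_collinear by blast
qed

end
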